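(* If $s\ge 3$ and $q\ge m+1$, then $\pi\ge 2n-3q-3m+1$.
   Context: $G$ is a set of size $n$ and $G(\circ)$, $G(\ast)$ are distinct groups on $G$ with the same identity element. $\mathrm{diff}(\circ,\ast)=\{(a,b):a\circ b\ne a\ast b\}$, $\mathrm{dist}(\circ,\ast)=|\mathrm{diff}(\circ,\ast)|$, $\mathrm{dist}_a=|\{b:a\circ b\ne a\ast b\}|$; $H=\{a:\mathrm{dist}_a=0\}$, $h=|H|$; $K=\{a:\mathrm{dist}_a<n/3\}$, $k=|K|$; $m=\min\{\mathrm{dist}_a:\mathrm{dist}_a>0\}$. Standing assumption: $m\ge 3$. Let $q=\lceil n/3\rceil$ and the profit $\pi=\mathrm{dist}(\circ,\ast)-((k-h)m+(n-k)q)$. Let $S=\{(a,b)\in\mathrm{diff}(\circ,\ast):a,b\in K,\ a\ne b\}$, $s=|S|$. *)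

theory Defs
  imports Complex_Main "HOL-Algebra.Group"
begin

text \<open>Two group structures on the same carrier G, given by binary operations
  f (written o in the paper) and g (written * in the paper).\<close>

definition diffset :: "'a set \<Rightarrow> ('a \<Rightarrow> 'a \<Rightarrow> 'a) \<Rightarrow> ('a \<Rightarrow> 'a \<Rightarrow> 'a) \<Rightarrow> ('a \<times> 'a) set" where
  "diffset G f g = {(a, b). a \<in> G \<and> b \<in> G \<and> f a b \<noteq> g a b}"

definition distance :: "'a set \<Rightarrow> ('a \<Rightarrow> 'a \<Rightarrow> 'a) \<Rightarrow> ('a \<Rightarrow> 'a \<Rightarrow> 'a) \<Rightarrow> nat" where
  "distance G f g = card (diffset G f g)"

definition dist_at :: "'a set \<Rightarrow> ('a \<Rightarrow> 'a \<Rightarrow> 'a) \<Rightarrow> ('a \<Rightarrow> 'a \<Rightarrow> 'a) \<Rightarrow> 'a \<Rightarrow> nat" where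
  "dist_at G f g a = card {b \<in> G. f a b \<noteq> g a b}"

definition Hset :: "'a set \<Rightarrow> ('a \<Rightarrow> 'a \<Rightarrow> 'a) \<Rightarrow> ('a \<Rightarrow> 'a \<Rightarrow> 'a) \<Rightarrow> 'a set" where
  "Hset G f g = {a \<in> G. dist_at G f g a = 0}"

definition Kset :: "'a set \<Rightarrow> ('a \<Rightarrow> 'a \<Rightarrow> 'a) \<Rightarrow> ('a \<Rightarrow> 'a \<Rightarrow> 'a) \<Rightarrow> 'a set" where
  "Kset G f g = {a \<in> G. real (dist_at G f g a) < real (card G) / 3}"

definition mval :: "'a set \<Rightarrow> ('a \<Rightarrow> 'a \<Rightarrow> 'a) \<Rightarrow> ('a \<Rightarrow> 'a \<Rightarrow> 'a) \<Rightarrow> nat" where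
  "mval G f g = Min {dist_at G f g a | a. a \<in> G \<and> dist_at G f g a > 0}"

definition qval :: "nat \<Rightarrow> nat" where
  "qval n = nat \<lceil>real n / 3\<rceil>"

definition profit :: "'a set \<Rightarrow> ('a \<Rightarrow> 'a \<Rightarrow> 'a) \<Rightarrow> ('a \<Rightarrow> 'a \<Rightarrow> 'a) \<Rightarrow> int" where
  "profit G f g = int (distance G f g)
     - ((int (card (Kset G f g)) - int (card (Hset G f g))) * int (mval G f g)
        + (int (card G) - int (card (Kset G f g))) * int (qval (card G)))"

definition Sset :: "'a set \<Rightarrow> ('a \<Rightarrow> 'a \<Rightarrow> 'a) \<Rightarrow> ('a \<Rightarrow> 'a \<Rightarrow> 'a) \<Rightarrow> ('a \<times> 'a) set" where
  "Sset G f g = {(a, b) \<in> diffset G f g. a \<in> Kset G f g \<and> b \<in> Kset G f g \<and> a \<noteq> b}"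

end

theory Submission
  imports Defs
begin

text \<open>Write \<open>x\<^sub>a\<close> for \<open>dist_at G f g a\<close>. For a pair \<open>(u, v)\<close> with \<open>f u v \<noteq> g u v\<close>,
  put \<open>c = f u v\<close> and \<open>d = g u v\<close>. Every \<open>y\<close> with \<open>f v y = g v y\<close> and
  \<open>f u (g v y) = g u (g v y)\<close> satisfies \<open>f c y = g d y \<noteq> g c y\<close>, so such \<open>y\<close> lie in
  the row of \<open>c\<close>, and the other \<open>y\<close> are controlled by the rows of \<open>u\<close> and \<open>v\<close>:
  \<open>n \<le> x\<^sub>c + x\<^sub>u + x\<^sub>v\<close>, and likewise for \<open>d\<close>. Hence if \<open>u, v \<in> K\<close>, then \<open>c \<noteq> d\<close>
  both lie outside \<open>K\<close>.

  The profit is a sum of nonnegative contributions \<open>x\<^sub>a - m\<close> over \<open>K - H\<close> and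
  \<open>x\<^sub>a - q\<close> over \<open>G - K\<close>. Take \<open>(u, v) \<in> S\<close> minimising \<open>x\<^sub>u + x\<^sub>v\<close>; the
  contributions of \<open>c\<close> and \<open>d\<close> give at least \<open>2n - 2(x\<^sub>u + x\<^sub>v) - 2q\<close>. If
  \<open>x\<^sub>v = 0\<close>, adding the contribution of \<open>u\<close> suffices. Otherwise, since \<open>|S| \<ge> 3\<close>,
  some pair of \<open>S\<close> other than \<open>(u, v), (v, u)\<close> yields a third vertex \<open>z \<in> K - H\<close>
  with \<open>x\<^sub>u + x\<^sub>v < x\<^sub>z + q\<close>, and the contributions of \<open>u, v, z\<close> suffice.\<close>

lemma dist_at_commute: "dist_at G g f = dist_at G f g"
  unfolding dist_at_def by (intro ext arg_cong[where f = card]) auto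

lemma dist_at_pos_iff:
  assumes "finite G"
  shows "0 < dist_at G f g a \<longleftrightarrow> (\<exists>b\<in>G. f a b \<noteq> g a b)"
  using assms by (auto simp: dist_at_def card_gt_0_iff)

lemma card_le_dist_at_mult:
  assumes fin: "finite G"
    and gf: "group \<lparr>carrier = G, mult = f, one = e\<rparr>"
    and gg: "group \<lparr>carrier = G, mult = g, one = e\<rparr>"
    and u: "u \<in> G" and v: "v \<in> G" and ne: "f u v \<noteq> g u v"
  shows "card G \<le> dist_at G f g (f u v) + dist_at G f g u + dist_at G f g v"
proof -
  interpret F: group "\<lparr>carrier = G, mult = f, one = e\<rparr>" by (rule gf)
  interpret Gr: group "\<lparr>carrier = G, mult = g, one = e\<rparr>" by (rule gg)
  define row where "row a = {b \<in> G. f a b \<noteq> g a b}" for a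
  define X where "X = {y \<in> G. y \<notin> row v \<and> g v y \<notin> row u}"
  define Y where "Y = {y \<in> G. g v y \<in> row u}"
  have "X \<subseteq> row (f u v)"
  proof
    fix y assume y: "y \<in> X"
    then have yG: "y \<in> G" by (simp add: X_def)
    have "f (f u v) y = f u (g v y)"
      using y u v F.m_assoc[of u v y] by (simp add: X_def row_def)
    also have "\<dots> = g (g u v) y"
      using y u v Gr.m_assoc[of u v y] Gr.m_closed[of v y] by (simp add: X_def row_def)
    also have "\<dots> \<noteq> g (f u v) y"
      using ne u v yG Gr.right_cancel[of y "g u v" "f u v"] F.m_closed Gr.m_closed by auto
    finally show "y \<in> row (f u v)"
      using yG by (simp add: row_def)
  qed
  then have X: "card X \<le> dist_at G f g (f u v)"
    using fin by (auto simp: dist_at_def row_def intro: card_mono)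
  have "inj_on (g v) Y"
    using Gr.inj_on_cmult[of v] v by (auto simp: Y_def inj_on_def)
  moreover have "g v ` Y \<subseteq> row u"
    by (auto simp: Y_def)
  ultimately have Y: "card Y \<le> dist_at G f g u"
    using fin by (auto simp: dist_at_def row_def intro: card_inj_on_le)
  have "G = X \<union> row v \<union> Y"
    by (auto simp: X_def Y_def row_def)
  then have "card G \<le> card X + card (row v) + card Y"
    by (metis card_Un_le add_le_mono le_refl order_trans)
  then show ?thesis
    using X Y by (simp add: dist_at_def row_def)
qed

lemma Kset_subset: "Kset G f g \<subseteq> G"
  by (auto simp: Kset_def)

lemma Sset_memD:
  assumes "(a, b) \<in> Sset G f g"
  shows "a \<in> Kset G f g" "b \<in> Kset G f g" "a \<noteq> b" "a \<in> G" "b \<in> G" "f a b \<noteq> g a b"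
  using assms by (auto simp: Sset_def diffset_def)

lemma Sset_fst_dist_at_pos:
  assumes "finite G" "(a, b) \<in> Sset G f g"
  shows "0 < dist_at G f g a"
  using assms Sset_memD[OF assms(2)] by (auto simp: dist_at_pos_iff)

lemma notin_Hset_if_dist_at_pos: "0 < dist_at G f g a \<Longrightarrow> a \<notin> Hset G f g"
  by (simp add: Hset_def)

lemma dist_at_less_qval_if_in_Kset:
  assumes "a \<in> Kset G f g"
  shows "dist_at G f g a < qval (card G)"
proof -
  have "real (dist_at G f g a) < real (card G) / 3"
    using assms by (simp add: Kset_def)
  then have "int (dist_at G f g a) < \<lceil>real (card G) / 3\<rceil>"
    by (simp add: less_ceiling_iff)
  then show ?thesis
    unfolding qval_def by linarith
qed

lemma qval_le_dist_at_if_notin_Kset: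
  assumes "a \<in> G" "a \<notin> Kset G f g"
  shows "qval (card G) \<le> dist_at G f g a"
proof -
  have "real (card G) / 3 \<le> real (dist_at G f g a)"
    using assms by (auto simp: Kset_def)
  then show ?thesis
    unfolding qval_def by (simp add: ceiling_le_iff nat_le_iff)
qed

lemma notin_Kset_if_card_le:
  assumes n: "card G \<le> dist_at G f g c + dist_at G f g u + dist_at G f g v"
    and "u \<in> Kset G f g" "v \<in> Kset G f g"
  shows "c \<notin> Kset G f g"
proof -
  have "real (card G) \<le> real (dist_at G f g c) + real (dist_at G f g u) + real (dist_at G f g v)"
    using n by (simp flip: of_nat_add)
  then show ?thesis
    using assms(2,3) by (auto simp: Kset_def)
qed

lemma mval_le_dist_at:
  assumes "finite G" "a \<in> G" "0 < dist_at G f g a"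
  shows "mval G f g \<le> dist_at G f g a"
proof -
  have "{dist_at G f g a | a. a \<in> G \<and> 0 < dist_at G f g a} \<subseteq> dist_at G f g ` G"
    by auto
  then have "finite {dist_at G f g a | a. a \<in> G \<and> 0 < dist_at G f g a}"
    using assms(1) finite_subset by blast
  then show ?thesis
    unfolding mval_def using assms by (intro Min_le) auto
qed

lemma distance_eq_sum_dist_at:
  assumes "finite G"
  shows "distance G f g = (\<Sum>a\<in>G. dist_at G f g a)"
proof -
  have "diffset G f g = Sigma G (\<lambda>a. {b \<in> G. f a b \<noteq> g a b})"
    by (auto simp: diffset_def)
  then show ?thesis
    using assms by (simp add: distance_def dist_at_def)
qed

lemma profit_eq_sum:
  assumes fin: "finite G" and ne: "G \<noteq> {}"
  shows "profit G f g = (\<Sum>a\<in>Kset G f g - Hset G f g. int (dist_at G f g a) - int (mval G f g))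
     + (\<Sum>a\<in>G - Kset G f g. int (dist_at G f g a) - int (qval (card G)))"
proof -
  let ?x = "\<lambda>a. int (dist_at G f g a)"
  let ?K = "Kset G f g" and ?H = "Hset G f g"
  have HK: "?H \<subseteq> ?K"
    using fin ne by (auto simp: Hset_def Kset_def card_gt_0_iff)
  have fK: "finite ?K"
    using finite_subset[OF Kset_subset[of G f g] fin] .
  have fH: "finite ?H"
    using finite_subset[OF HK fK] .
  have "int (distance G f g) = (\<Sum>a\<in>G. ?x a)"
    using distance_eq_sum_dist_at[OF fin] by simp
  also have "\<dots> = (\<Sum>a\<in>G - ?K. ?x a) + (\<Sum>a\<in>?K - ?H. ?x a) + (\<Sum>a\<in>?H. ?x a)"
    using sum.subset_diff[OF Kset_subset[of G f g] fin, of ?x] sum.subset_diff[OF HK fK, of ?x] by linarith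
  also have "(\<Sum>a\<in>?H. ?x a) = 0"
    by (simp add: Hset_def)
  finally have dist: "int (distance G f g) = (\<Sum>a\<in>G - ?K. ?x a) + (\<Sum>a\<in>?K - ?H. ?x a)"
    by simp
  have "card G = card (G - ?K) + card ?K" "card ?K = card (?K - ?H) + card ?H"
    using card_Diff_subset[OF fK Kset_subset[of G f g]] card_mono[OF fin Kset_subset[of G f g]]
      card_Diff_subset[OF fH HK] card_mono[OF fK HK] by simp_all
  then show ?thesis
    unfolding profit_def dist by (simp add: sum_subtractf algebra_simps)
qed

lemma profit_ge_partial_sum:
  assumes fin: "finite G" and ne: "G \<noteq> {}"
    and A: "A \<subseteq> Kset G f g - Hset G f g"
    and C: "C \<subseteq> G - Kset G f g"
  shows "(\<Sum>a\<in>A. int (dist_at G f g a) - int (mval G f g))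
      + (\<Sum>a\<in>C. int (dist_at G f g a) - int (qval (card G))) \<le> profit G f g"
proof -
  let ?K = "Kset G f g" and ?H = "Hset G f g"
  have "(\<Sum>a\<in>A. int (dist_at G f g a) - int (mval G f g))
      \<le> (\<Sum>a\<in>?K - ?H. int (dist_at G f g a) - int (mval G f g))"
  proof (rule sum_mono2[OF _ A])
    show "finite (?K - ?H)"
      using finite_subset[OF Kset_subset[of G f g] fin] by blast
    fix a assume "a \<in> ?K - ?H - A"
    then have "a \<in> G" "0 < dist_at G f g a"
      by (auto simp: Kset_def Hset_def)
    then show "0 \<le> int (dist_at G f g a) - int (mval G f g)"
      using mval_le_dist_at[OF fin] by force
  qed
  moreover have "(\<Sum>a\<in>C. int (dist_at G f g a) - int (qval (card G)))
      \<le> (\<Sum>a\<in>G - ?K. int (dist_at G f g a) - int (qval (card G)))"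
  proof (rule sum_mono2[OF _ C])
    show "finite (G - ?K)"
      using fin by simp
    fix a assume "a \<in> G - ?K - C"
    then show "0 \<le> int (dist_at G f g a) - int (qval (card G))"
      using qval_le_dist_at_if_notin_Kset[of a G f g] by force
  qed
  ultimately show ?thesis
    using profit_eq_sum[OF fin ne, of f g] by simp
qed

lemma profit_ge_via_pair:
  assumes fin: "finite G"
    and gf: "group \<lparr>carrier = G, mult = f, one = e\<rparr>"
    and gg: "group \<lparr>carrier = G, mult = g, one = e\<rparr>"
    and u: "u \<in> Kset G f g" and v: "v \<in> Kset G f g" and ne: "f u v \<noteq> g u v"
    and A: "A \<subseteq> Kset G f g - Hset G f g"
  shows "(\<Sum>a\<in>A. int (dist_at G f g a) - int (mval G f g))
      + 2 * int (card G) - 2 * (int (dist_at G f g u) + int (dist_at G f g v)) - 2 * int (qval (card G))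
    \<le> profit G f g"
proof -
  let ?x = "dist_at G f g" and ?K = "Kset G f g" and ?q = "int (qval (card G))"
  have uG: "u \<in> G" and vG: "v \<in> G"
    using subsetD[OF Kset_subset[of G f g] u] subsetD[OF Kset_subset[of G f g] v] .
  have c: "card G \<le> ?x (f u v) + ?x u + ?x v"
    by (rule card_le_dist_at_mult[OF fin gf gg uG vG ne])
  have d: "card G \<le> ?x (g u v) + ?x u + ?x v"
    using card_le_dist_at_mult[OF fin gg gf uG vG ne[symmetric]] by (simp add: dist_at_commute)
  have C: "{f u v, g u v} \<subseteq> G - ?K"
    using notin_Kset_if_card_le[OF c u v] notin_Kset_if_card_le[OF d u v]
      monoid.m_closed[OF group.is_monoid[OF gf], of u v]
      monoid.m_closed[OF group.is_monoid[OF gg], of u v] uG vG by auto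
  have "(\<Sum>a\<in>{f u v, g u v}. int (?x a) - ?q) = int (?x (f u v)) - ?q + (int (?x (g u v)) - ?q)"
    using ne by simp
  then show ?thesis
    using profit_ge_partial_sum[OF fin _ A C] uG c d by force
qed

lemma Sset_third_vertex:
  assumes fin: "finite G"
    and S3: "3 \<le> card (Sset G f g)"
    and uv: "(u, v) \<in> Sset G f g" and v: "0 < dist_at G f g v"
    and min: "\<And>a b. (a, b) \<in> Sset G f g \<Longrightarrow>
      dist_at G f g u + dist_at G f g v \<le> dist_at G f g a + dist_at G f g b"
  obtains z where "z \<in> Kset G f g - Hset G f g" "z \<noteq> u" "z \<noteq> v"
    "dist_at G f g u + dist_at G f g v < dist_at G f g z + qval (card G)"
proof -
  let ?x = "dist_at G f g" and ?S = "Sset G f g"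
  have "\<not> ?S \<subseteq> {(u, v), (v, u)}"
  proof
    assume "?S \<subseteq> {(u, v), (v, u)}"
    then have "card ?S \<le> card {(u, v), (v, u)}"
      by (rule card_mono[rotated]) simp
    also have "\<dots> \<le> 2"
      by (rule card_insert_le_m1) simp_all
    finally show False
      using S3 by simp
  qed
  then obtain w y where wy: "(w, y) \<in> ?S" "(w, y) \<noteq> (u, v)" "(w, y) \<noteq> (v, u)"
    by fast
  have u: "0 < ?x u"
    by (rule Sset_fst_dist_at_pos[OF fin uv])
  have w: "0 < ?x w"
    by (rule Sset_fst_dist_at_pos[OF fin wy(1)])
  note w_facts = Sset_memD[OF wy(1)]
  have min_wy: "?x u + ?x v \<le> ?x w + ?x y"
    by (rule min[OF wy(1)])
  have bound: "?x u + ?x v < ?x w + qval (card G)" "?x u + ?x v < ?x y + qval (card G)"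
    using min_wy dist_at_less_qval_if_in_Kset[OF w_facts(1)]
      dist_at_less_qval_if_in_Kset[OF w_facts(2)] by linarith+
  show ?thesis
  proof (cases "w = u \<or> w = v")
    case True
    then have "y \<noteq> u" "y \<noteq> v"
      using wy(2,3) w_facts(3) by auto
    moreover have "0 < ?x y"
      using True min_wy u v by auto
    ultimately show ?thesis
      using that[of y] w_facts(2) bound(2) notin_Hset_if_dist_at_pos[of G f g y] by blast
  next
    case False
    then show ?thesis
      using that[of w] w_facts(1) w bound(1) notin_Hset_if_dist_at_pos[of G f g w] by blast
  qed
qed

lemma Sset_ex_min_pair:
  assumes "finite G" "Sset G f g \<noteq> {}"
  obtains u v where "(u, v) \<in> Sset G f g"
    "\<And>a b. (a, b) \<in> Sset G f g \<Longrightarrow>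
      dist_at G f g u + dist_at G f g v \<le> dist_at G f g a + dist_at G f g b"
proof -
  let ?x = "dist_at G f g" and ?S = "Sset G f g"
  have "?S \<subseteq> G \<times> G"
    by (auto dest: Sset_memD)
  then have "finite ?S"
    using assms(1) finite_subset by blast
  then obtain p where "is_arg_min (\<lambda>(a, b). ?x a + ?x b) (\<lambda>p. p \<in> ?S) p"
    using ex_is_arg_min_if_finite assms(2) by blast
  then show ?thesis
    using that by (cases p) (fastforce simp: is_arg_min_def not_less)
qed

lemma profit_ge_if_dist_at_snd_zero:
  assumes fin: "finite G"
    and gf: "group \<lparr>carrier = G, mult = f, one = e\<rparr>"
    and gg: "group \<lparr>carrier = G, mult = g, one = e\<rparr>"
    and uv: "(u, v) \<in> Sset G f g" and v: "dist_at G f g v = 0"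
  shows "2 * int (card G) - 3 * int (qval (card G)) - int (mval G f g) + 1 \<le> profit G f g"
proof -
  note uv_facts = Sset_memD[OF uv]
  have "u \<in> Kset G f g - Hset G f g"
    using uv_facts(1) notin_Hset_if_dist_at_pos[OF Sset_fst_dist_at_pos[OF fin uv]] by (rule DiffI)
  then have "int (dist_at G f g u) - int (mval G f g) + 2 * int (card G)
      - 2 * (int (dist_at G f g u) + int (dist_at G f g v)) - 2 * int (qval (card G)) \<le> profit G f g"
    using profit_ge_via_pair[OF fin gf gg uv_facts(1,2,6), of "{u}"] by simp
  moreover have "int (dist_at G f g u) < int (qval (card G))"
    using dist_at_less_qval_if_in_Kset[OF uv_facts(1)] by simp
  ultimately show ?thesis
    using v by simp
qed

lemma profit_ge_if_third_vertex:
  assumes fin: "finite G"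
    and gf: "group \<lparr>carrier = G, mult = f, one = e\<rparr>"
    and gg: "group \<lparr>carrier = G, mult = g, one = e\<rparr>"
    and uv: "(u, v) \<in> Sset G f g" and v: "0 < dist_at G f g v"
    and z: "z \<in> Kset G f g - Hset G f g" "z \<noteq> u" "z \<noteq> v"
      "dist_at G f g u + dist_at G f g v < dist_at G f g z + qval (card G)"
  shows "2 * int (card G) - 3 * int (qval (card G)) - 3 * int (mval G f g) + 1 \<le> profit G f g"
proof -
  let ?x = "dist_at G f g"
  note uv_facts = Sset_memD[OF uv]
  have "{u, v, z} \<subseteq> Kset G f g - Hset G f g"
    using uv_facts(1,2) z(1) notin_Hset_if_dist_at_pos[OF Sset_fst_dist_at_pos[OF fin uv]]
      notin_Hset_if_dist_at_pos[OF v] by blast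
  moreover have "(\<Sum>a\<in>{u, v, z}. int (?x a) - int (mval G f g))
      = int (?x u) + int (?x v) + int (?x z) - 3 * int (mval G f g)"
    using uv_facts(3) z(2,3) by simp
  ultimately have "int (?x z) - (int (?x u) + int (?x v)) - 3 * int (mval G f g) + 2 * int (card G)
      - 2 * int (qval (card G)) \<le> profit G f g"
    using profit_ge_via_pair[OF fin gf gg uv_facts(1,2,6), of "{u, v, z}"] by simp
  moreover have "int (?x u) + int (?x v) < int (?x z) + int (qval (card G))"
    using z(4) by simp
  ultimately show ?thesis
    by linarith
qed

theorem lemma10p1:
  fixes G :: "'a set" and f g :: "'a \<Rightarrow> 'a \<Rightarrow> 'a" and e :: 'a
  assumes "finite G"
    and "group \<lparr>carrier = G, mult = f, one = e\<rparr>"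
    and "group \<lparr>carrier = G, mult = g, one = e\<rparr>"
    and "\<exists>a\<in>G. \<exists>b\<in>G. f a b \<noteq> g a b"
    and "mval G f g \<ge> 3"
    and "card (Sset G f g) \<ge> 3"
    and "qval (card G) \<ge> mval G f g + 1"
  shows "profit G f g \<ge> 2 * int (card G) - 3 * int (qval (card G)) - 3 * int (mval G f g) + 1"
proof -
  have "Sset G f g \<noteq> {}"
    using assms(6) by auto
  then obtain u v where uv: "(u, v) \<in> Sset G f g"
    and min: "\<And>a b. (a, b) \<in> Sset G f g \<Longrightarrow>
      dist_at G f g u + dist_at G f g v \<le> dist_at G f g a + dist_at G f g b"
    using Sset_ex_min_pair[OF assms(1)] by blast
  show ?thesis
  proof (cases "dist_at G f g v = 0")
    case True
    then show ?thesis
      using profit_ge_if_dist_at_snd_zero[OF assms(1-3) uv] by simp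
  next
    case False
    then obtain z where "z \<in> Kset G f g - Hset G f g" "z \<noteq> u" "z \<noteq> v"
      "dist_at G f g u + dist_at G f g v < dist_at G f g z + qval (card G)"
      using Sset_third_vertex[OF assms(1,6) uv _ min] by blast
    then show ?thesis
      using profit_ge_if_third_vertex[OF assms(1-3) uv] False by blast
  qed
qed

end
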